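(* Let $T_1\subseteq T_2\subseteq\cdots$ be well ordered sets, each $T_n$ carrying the restriction of the order of $T_{n+1}$, all having the same minimum and the same maximum. Let $T=\bigcup_n T_n$ with the induced linear order and let $\bar T$ be its completion. Then $\bar T$, with its order topology, is a Radon-Nikodým compact space.
   Context: The completion of a linearly ordered set $T$ is the unique linearly ordered set $\bar T\supseteq T$ (extending the order of $T$) such that $\bar T$ is compact in its order topology and $]x,y]\cap T\neq\emptyset$ for all $x<y$ in $\bar T$, where $]x,y]=\{z:x<z\le y\}$. A map $d:K\times K\to[0,+\infty)$ fragments a topological space $K$ if for every nonempty closed $L\subseteq K$ and every $\varepsilon>0$ there is a nonempty relatively open $U\subseteq L$ with $\sup\{d(x,y):x,y\in U\}<\varepsilon$; $d$ is lower semicontinuous if $\{(x,y):d(x,y)\le a\}$ is closed for all $a\ge0$. A compact space $K$ is Radon-Nikodým compact if there is a lower semicontinuous metric on $K$ which fragments $K$. *)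

theory Defs
  imports "HOL-Analysis.Analysis"
begin

definition well_ordered_set :: "'a::linorder set \<Rightarrow> bool" where
  "well_ordered_set S \<longleftrightarrow> (\<forall>A. A \<subseteq> S \<and> A \<noteq> {} \<longrightarrow> (\<exists>m\<in>A. \<forall>x\<in>A. m \<le> x))"

definition order_topology_on :: "'a::linorder set \<Rightarrow> 'a topology" where
  "order_topology_on K =
     subtopology
       (topology_generated_by ({{x\<in>K. x < a} | a. a \<in> K} \<union> {{x\<in>K. a < x} | a. a \<in> K})) K"

definition is_completion :: "'a::linorder set \<Rightarrow> 'a set \<Rightarrow> bool" where
  "is_completion T K \<longleftrightarrow> T \<subseteq> K \<and> compact_space (order_topology_on K) \<and>
     (\<forall>x\<in>K. \<forall>y\<in>K. x < y \<longrightarrow> {z\<in>K. x < z \<and> z \<le> y} \<inter> T \<noteq> {})"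

definition fragments :: "('a \<Rightarrow> 'a \<Rightarrow> real) \<Rightarrow> 'a topology \<Rightarrow> bool" where
  "fragments d X \<longleftrightarrow>
     (\<forall>L \<epsilon>. closedin X L \<and> L \<noteq> {} \<and> \<epsilon> > 0 \<longrightarrow>
        (\<exists>U. openin (subtopology X L) U \<and> U \<noteq> {} \<and>
             (\<exists>c < \<epsilon>. \<forall>x\<in>U. \<forall>y\<in>U. d x y \<le> c)))"

definition lower_semicontinuous_map2 :: "('a \<Rightarrow> 'a \<Rightarrow> real) \<Rightarrow> 'a topology \<Rightarrow> bool" where
  "lower_semicontinuous_map2 d X \<longleftrightarrow>
     (\<forall>a\<ge>0. closedin (prod_topology X X)
                {(x,y). x \<in> topspace X \<and> y \<in> topspace X \<and> d x y \<le> a})"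

definition radon_nikodym_compact :: "'a topology \<Rightarrow> bool" where
  "radon_nikodym_compact X \<longleftrightarrow> compact_space X \<and>
     (\<exists>d. Metric_space (topspace X) d \<and> lower_semicontinuous_map2 d X \<and> fragments d X)"

end

theory Submission
  imports Defs
begin

text \<open>
  The metric is built from countably many continuous steps.  For each level n, the gaps of
  level n are the pairs a < b of consecutive elements of T_n together with the jumps of K ending
  in T_n; for each gap an Urysohn function of the compact Hausdorff space K steps from 0 (up to
  a) to 1 (from b on).  The distance of x and y is the supremum over all levels n and gaps i of
  level n of 2^-n |f_i x - f_i y|.
\<close>

locale graded_family =
  fixes X :: "'a topology" and I :: "nat \<Rightarrow> 'i set" and f :: "'i \<Rightarrow> 'a \<Rightarrow> real"
  assumes continuous: "\<And>n i. i \<in> I n \<Longrightarrow> continuous_map X euclideanreal (f i)"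
    and range: "\<And>n i x. i \<in> I n \<Longrightarrow> f i x \<in> {0..1}"
begin

text \<open>The weighted supremum distance; 0 is included so that it is nonnegative even for an
  empty family.\<close>

definition graded_dist :: "'a \<Rightarrow> 'a \<Rightarrow> real" where
  "graded_dist x y = Sup (insert 0 {(1/2)^n * \<bar>f i x - f i y\<bar> | n i. i \<in> I n})"

lemma weighted_term_le_one: "i \<in> I n \<Longrightarrow> (1/2::real)^n * \<bar>f i x - f i y\<bar> \<le> 1"
  using range[of i n x] range[of i n y] by (intro mult_le_one) (auto simp: power_le_one)

lemma graded_dist_bdd: "bdd_above (insert 0 {(1/2::real)^n * \<bar>f i x - f i y\<bar> | n i. i \<in> I n})"
  using weighted_term_le_one by (auto intro!: bdd_aboveI[of _ 1])

lemma weighted_term_le_graded_dist: "i \<in> I n \<Longrightarrow> (1/2)^n * \<bar>f i x - f i y\<bar> \<le> graded_dist x y"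
  unfolding graded_dist_def by (rule cSup_upper[OF _ graded_dist_bdd]) auto

lemma graded_dist_nonneg: "0 \<le> graded_dist x y"
  unfolding graded_dist_def by (rule cSup_upper[OF _ graded_dist_bdd]) auto

lemma graded_dist_le_iff:
  assumes "0 \<le> c"
  shows "graded_dist x y \<le> c \<longleftrightarrow> (\<forall>n. \<forall>i\<in>I n. (1/2)^n * \<bar>f i x - f i y\<bar> \<le> c)"
proof
  assume "graded_dist x y \<le> c"
  then show "\<forall>n. \<forall>i\<in>I n. (1/2)^n * \<bar>f i x - f i y\<bar> \<le> c"
    using weighted_term_le_graded_dist order_trans by blast
next
  assume "\<forall>n. \<forall>i\<in>I n. (1/2)^n * \<bar>f i x - f i y\<bar> \<le> c"
  then show "graded_dist x y \<le> c"
    unfolding graded_dist_def using assms by (intro cSup_least) auto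
qed

lemma graded_dist_commute: "graded_dist x y = graded_dist y x"
  unfolding graded_dist_def by (simp add: abs_minus_commute)

lemma graded_dist_triangle: "graded_dist x z \<le> graded_dist x y + graded_dist y z"
proof -
  have "(1/2)^n * \<bar>f i x - f i z\<bar> \<le> graded_dist x y + graded_dist y z" if "i \<in> I n" for n i
  proof -
    have "(1/2::real)^n * \<bar>f i x - f i z\<bar> \<le> (1/2)^n * \<bar>f i x - f i y\<bar> + (1/2)^n * \<bar>f i y - f i z\<bar>"
      by (simp add: distrib_left[symmetric] mult_left_mono)
    then show ?thesis
      using weighted_term_le_graded_dist[OF that, of x y] weighted_term_le_graded_dist[OF that, of y z]
      by linarith
  qed
  then show ?thesis
    using graded_dist_le_iff graded_dist_nonneg by (meson add_nonneg_nonneg)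
qed

lemma graded_dist_metric:
  assumes separating: "\<And>x y. x \<in> topspace X \<Longrightarrow> y \<in> topspace X \<Longrightarrow> x \<noteq> y \<Longrightarrow>
                          \<exists>n. \<exists>i\<in>I n. f i x \<noteq> f i y"
  shows "Metric_space (topspace X) graded_dist"
proof
  fix x y assume xy: "x \<in> topspace X" "y \<in> topspace X"
  show "graded_dist x y = 0 \<longleftrightarrow> x = y"
  proof
    assume "graded_dist x y = 0"
    then have small: "\<forall>n. \<forall>i\<in>I n. (1/2::real)^n * \<bar>f i x - f i y\<bar> \<le> 0"
      using graded_dist_le_iff[of 0 x y] by simp
    show "x = y"
    proof (rule ccontr)
      assume "x \<noteq> y"
      then obtain n i where "i \<in> I n" "f i x \<noteq> f i y" using separating[OF xy] by blast
      then have "0 < (1/2::real)^n * \<bar>f i x - f i y\<bar>" by simp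
      then show False using small \<open>i \<in> I n\<close> by fastforce
    qed
  next
    assume "x = y"
    then show "graded_dist x y = 0"
      using graded_dist_le_iff[of 0 x y] graded_dist_nonneg[of x y] by simp
  qed
qed (auto simp: graded_dist_nonneg graded_dist_commute graded_dist_triangle)

lemma continuous_weighted_term:
  assumes "i \<in> I n"
  shows "continuous_map (prod_topology X X) euclideanreal (\<lambda>p. (1/2)^n * \<bar>f i (fst p) - f i (snd p)\<bar>)"
proof -
  have "continuous_map (prod_topology X X) euclideanreal (f i \<circ> fst)"
       "continuous_map (prod_topology X X) euclideanreal (f i \<circ> snd)"
    using continuous[OF assms] continuous_map_fst continuous_map_snd continuous_map_compose by blast+
  then show ?thesis by (intro continuous_intros) (simp_all add: o_def)
qed

text \<open>As a supremum of continuous functions, the distance is lower semicontinuous.\<close>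

lemma graded_dist_lsc: "lower_semicontinuous_map2 graded_dist X"
  unfolding lower_semicontinuous_map2_def
proof (intro allI impI)
  fix c :: real assume "0 \<le> c"
  let ?Y = "prod_topology X X"
  let ?C = "\<lambda>(n, i). {p \<in> topspace ?Y. (1/2)^n * \<bar>f i (fst p) - f i (snd p)\<bar> \<in> {..c}}"
  have sublevel: "{(x,y). x \<in> topspace X \<and> y \<in> topspace X \<and> graded_dist x y \<le> c} =
        \<Inter> (insert (topspace ?Y) (?C ` {(n, i). i \<in> I n}))"
    using graded_dist_le_iff[OF \<open>0 \<le> c\<close>] by auto
  have "closedin ?Y (?C (n, i))" if "i \<in> I n" for n i
    using closedin_continuous_map_preimage[OF continuous_weighted_term[OF that], of "{..c}"] by auto
  then show "closedin ?Y {(x,y). x \<in> topspace X \<and> y \<in> topspace X \<and> graded_dist x y \<le> c}"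
    unfolding sublevel by (intro closedin_Inter) (auto simp flip: topspace_prod_topology)
qed
text \<open>Fragmentation reduces to a level-by-level statement: each nonempty set can be cut by an
  open set on which all functions of one given level oscillate by at most \<delta>.\<close>

lemma uniform_on_levels_below:
  assumes level: "\<And>A n \<delta>. A \<subseteq> topspace X \<Longrightarrow> A \<noteq> {} \<Longrightarrow> \<delta> > 0 \<Longrightarrow>
      \<exists>Q. openin X Q \<and> A \<inter> Q \<noteq> {} \<and> (\<forall>i\<in>I n. \<forall>x\<in>A\<inter>Q. \<forall>y\<in>A\<inter>Q. \<bar>f i x - f i y\<bar> \<le> \<delta>)"
    and A: "A \<subseteq> topspace X" "A \<noteq> {}" and "\<delta> > 0"
  shows "\<exists>Q. openin X Q \<and> A \<inter> Q \<noteq> {} \<and>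
           (\<forall>n<N. \<forall>i\<in>I n. \<forall>x\<in>A\<inter>Q. \<forall>y\<in>A\<inter>Q. \<bar>f i x - f i y\<bar> \<le> \<delta>)"
proof (induction N)
  case 0
  show ?case using A by (intro exI[of _ "topspace X"]) auto
next
  case (Suc N)
  then obtain Q where Q: "openin X Q" "A \<inter> Q \<noteq> {}"
    and below: "\<forall>n<N. \<forall>i\<in>I n. \<forall>x\<in>A\<inter>Q. \<forall>y\<in>A\<inter>Q. \<bar>f i x - f i y\<bar> \<le> \<delta>"
    by blast
  have "A \<inter> Q \<subseteq> topspace X" using A by blast
  then obtain Q' where Q': "openin X Q'" "A \<inter> Q \<inter> Q' \<noteq> {}"
    and at: "\<forall>i\<in>I N. \<forall>x\<in>A\<inter>Q\<inter>Q'. \<forall>y\<in>A\<inter>Q\<inter>Q'. \<bar>f i x - f i y\<bar> \<le> \<delta>"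
    using level[OF _ Q(2) \<open>\<delta> > 0\<close>, of N] by blast
  have "\<forall>n<Suc N. \<forall>i\<in>I n. \<forall>x\<in>A\<inter>(Q\<inter>Q'). \<forall>y\<in>A\<inter>(Q\<inter>Q'). \<bar>f i x - f i y\<bar> \<le> \<delta>"
    using below at by (auto simp: less_Suc_eq)
  then show ?case
    using Q Q' by (intro exI[of _ "Q \<inter> Q'"]) (auto simp: Int_assoc)
qed

text \<open>Levels from N on contribute at most 2^-N to the distance, so the level-by-level
  property makes the distance fragment X.\<close>

lemma graded_dist_fragments:
  assumes level: "\<And>A n \<delta>. A \<subseteq> topspace X \<Longrightarrow> A \<noteq> {} \<Longrightarrow> \<delta> > 0 \<Longrightarrow>
      \<exists>Q. openin X Q \<and> A \<inter> Q \<noteq> {} \<and> (\<forall>i\<in>I n. \<forall>x\<in>A\<inter>Q. \<forall>y\<in>A\<inter>Q. \<bar>f i x - f i y\<bar> \<le> \<delta>)"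
  shows "fragments graded_dist X"
  unfolding fragments_def
proof (intro allI impI)
  fix L and \<epsilon> :: real assume L: "closedin X L \<and> L \<noteq> {} \<and> \<epsilon> > 0"
  obtain N where N: "(1/2::real)^N < \<epsilon>" using real_arch_pow_inv[of \<epsilon> "1/2"] L by auto
  have "L \<subseteq> topspace X" "L \<noteq> {}" "\<epsilon>/2 > 0" using L closedin_subset by auto
  then obtain Q where Q: "openin X Q" "L \<inter> Q \<noteq> {}"
    and low: "\<forall>n<N. \<forall>i\<in>I n. \<forall>x\<in>L\<inter>Q. \<forall>y\<in>L\<inter>Q. \<bar>f i x - f i y\<bar> \<le> \<epsilon>/2"
    using uniform_on_levels_below[OF level, of L "\<epsilon>/2" N] by blast
  define c where "c = max (\<epsilon>/2) ((1/2::real)^N)"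
  have "graded_dist x y \<le> c" if xy: "x \<in> L \<inter> Q" "y \<in> L \<inter> Q" for x y
  proof -
    have "(1/2)^n * \<bar>f i x - f i y\<bar> \<le> c" if i: "i \<in> I n" for n i
    proof (cases "n < N")
      case True
      have "(1/2::real)^n * \<bar>f i x - f i y\<bar> \<le> \<bar>f i x - f i y\<bar>"
        by (rule mult_left_le_one_le) (auto simp: power_le_one)
      also have "\<dots> \<le> \<epsilon>/2" using low True i xy by simp
      finally show ?thesis unfolding c_def by linarith
    next
      case False
      have "\<bar>f i x - f i y\<bar> \<le> 1" using range[OF i, of x] range[OF i, of y] by auto
      then have "(1/2::real)^n * \<bar>f i x - f i y\<bar> \<le> (1/2)^n"
        by (intro mult_right_le_one_le) auto
      also have "\<dots> \<le> (1/2)^N" using False by (intro power_decreasing) auto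
      finally show ?thesis unfolding c_def by linarith
    qed
    moreover have "0 \<le> c" unfolding c_def by (simp add: le_max_iff_disj)
    ultimately show ?thesis by (simp add: graded_dist_le_iff)
  qed
  moreover have "c < \<epsilon>" using N L unfolding c_def by auto
  moreover have "openin (subtopology X L) (L \<inter> Q)" using Q(1) by (auto simp: openin_subtopology)
  ultimately show "\<exists>U. openin (subtopology X L) U \<and> U \<noteq> {} \<and>
                       (\<exists>c<\<epsilon>. \<forall>x\<in>U. \<forall>y\<in>U. graded_dist x y \<le> c)"
    using Q(2) by (intro exI[of _ "L \<inter> Q"] conjI exI[of _ c]) auto
qed

end

lemma topspace_order_topology_on: "topspace (order_topology_on K) \<subseteq> K"
  unfolding order_topology_on_def by simp

lemma openin_order_topology_below: "a \<in> K \<Longrightarrow> openin (order_topology_on K) {x\<in>K. x < a}"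
  unfolding order_topology_on_def openin_subtopology
  by (rule exI[of _ "{x\<in>K. x < a}"]) (auto intro: topology_generated_by_Basis)

lemma openin_order_topology_above: "a \<in> K \<Longrightarrow> openin (order_topology_on K) {x\<in>K. a < x}"
  unfolding order_topology_on_def openin_subtopology
  by (rule exI[of _ "{x\<in>K. a < x}"]) (auto intro: topology_generated_by_Basis)

lemma closedin_order_topology_atMost:
  assumes "a \<in> K"
  shows "closedin (order_topology_on K) {x\<in>topspace (order_topology_on K). x \<le> a}"
proof -
  have "{x\<in>topspace (order_topology_on K). x \<le> a} = topspace (order_topology_on K) - {x\<in>K. a < x}"
    using topspace_order_topology_on by auto
  then show ?thesis using openin_order_topology_above[OF assms] by auto
qed

lemma closedin_order_topology_atLeast:
  assumes "a \<in> K"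
  shows "closedin (order_topology_on K) {x\<in>topspace (order_topology_on K). a \<le> x}"
proof -
  have "{x\<in>topspace (order_topology_on K). a \<le> x} = topspace (order_topology_on K) - {x\<in>K. x < a}"
    using topspace_order_topology_on by auto
  then show ?thesis using openin_order_topology_below[OF assms] by auto
qed

text \<open>Two points x < y are separated by the rays below and above a point between them, or,
  if there is no such point, by the rays below y and above x.\<close>

lemma order_topology_separates:
  assumes "x \<in> K" "y \<in> K" "x < y"
  shows "\<exists>U V. openin (order_topology_on K) U \<and> openin (order_topology_on K) V \<and>
               x \<in> U \<and> y \<in> V \<and> disjnt U V"
proof (cases "\<exists>z\<in>K. x < z \<and> z < y")
  case True
  then obtain z where z: "z \<in> K" "x < z" "z < y" by blast
  have "disjnt {w\<in>K. w < z} {w\<in>K. z < w}" by (auto simp: disjnt_def)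
  then show ?thesis
    using assms z openin_order_topology_below[OF z(1)] openin_order_topology_above[OF z(1)]
    by blast
next
  case False
  then have "disjnt {w\<in>K. w < y} {w\<in>K. x < w}" by (auto simp: disjnt_def)
  then show ?thesis
    using assms openin_order_topology_below[OF assms(2)] openin_order_topology_above[OF assms(1)]
    by blast
qed

lemma Hausdorff_order_topology: "Hausdorff_space (order_topology_on K)"
  unfolding Hausdorff_space_def
proof (intro allI impI)
  fix x y assume xy: "x \<in> topspace (order_topology_on K) \<and> y \<in> topspace (order_topology_on K) \<and> x \<noteq> y"
  then have K: "x \<in> K" "y \<in> K" using topspace_order_topology_on by auto
  show "\<exists>U V. openin (order_topology_on K) U \<and> openin (order_topology_on K) V \<and>
                   x \<in> U \<and> y \<in> V \<and> disjnt U V"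
  proof (cases "x < y")
    case True
    show ?thesis using order_topology_separates[OF K True] .
  next
    case False
    then have "y < x" using xy by (simp add: neq_iff)
    then obtain U V where "openin (order_topology_on K) U" "openin (order_topology_on K) V"
      "y \<in> U" "x \<in> V" "disjnt U V"
      using order_topology_separates[OF K(2,1)] by blast
    then show ?thesis by (intro exI[of _ V] exI[of _ U]) (simp add: disjnt_sym)
  qed
qed

lemma order_step_function:
  assumes "normal_space (order_topology_on K)" "a \<in> K" "b \<in> K" "a < b"
  shows "\<exists>g. continuous_map (order_topology_on K) euclideanreal g \<and> (\<forall>x. g x \<in> {0..1}) \<and>
           (\<forall>x\<in>topspace (order_topology_on K). x \<le> a \<longrightarrow> g x = 0) \<and>
           (\<forall>x\<in>topspace (order_topology_on K). b \<le> x \<longrightarrow> g x = 1)"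
proof -
  let ?X = "order_topology_on K"
  have "disjnt {x\<in>topspace ?X. x \<le> a} {x\<in>topspace ?X. b \<le> x}"
    using assms by (auto simp: disjnt_def)
  then obtain h where h: "continuous_map ?X euclideanreal h"
    "h ` {x\<in>topspace ?X. x \<le> a} \<subseteq> {0}" "h ` {x\<in>topspace ?X. b \<le> x} \<subseteq> {1}"
    using Urysohn_lemma_alt[OF assms(1) closedin_order_topology_atMost[OF assms(2)]
        closedin_order_topology_atLeast[OF assms(3)], of 0 1] by blast
  show ?thesis
    using h by (intro exI[of _ "\<lambda>x. max 0 (min 1 (h x))"]) (auto intro!: continuous_intros)
qed


definition consecutive :: "'a::linorder set \<Rightarrow> 'a \<Rightarrow> 'a \<Rightarrow> bool" where
  "consecutive S a b \<longleftrightarrow> a \<in> S \<and> b \<in> S \<and> a < b \<and> (\<forall>r\<in>S. \<not> (a < r \<and> r < b))"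

lemma finite_successors: "finite {b. consecutive S a b}"
proof -
  have "b = b'" if "consecutive S a b" "consecutive S a b'" for b b'
    using that unfolding consecutive_def by (metis linorder_neqE)
  then have "{b. consecutive S a b} \<subseteq> {SOME b. consecutive S a b}"
    by (metis (mono_tags) mem_Collect_eq singletonI someI subsetI)
  then show ?thesis using finite_subset by blast
qed

lemma finite_predecessors: "finite {a. consecutive S a b}"
proof -
  have "a = a'" if "consecutive S a b" "consecutive S a' b" for a a'
    using that unfolding consecutive_def by (metis linorder_neqE)
  then have "{a. consecutive S a b} \<subseteq> {SOME a. consecutive S a b}"
    by (metis (mono_tags) mem_Collect_eq singletonI someI subsetI)
  then show ?thesis using finite_subset by blast
qed


lemma finitely_many_continuous_near:
  assumes "finite W" "\<And>w. w \<in> W \<Longrightarrow> continuous_map X euclideanreal (g w)"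
    and "p \<in> topspace X" "\<delta> > 0"
  shows "\<exists>Q. openin X Q \<and> p \<in> Q \<and> (\<forall>w\<in>W. \<forall>x\<in>Q. \<bar>g w x - g w p\<bar> < \<delta>)"
proof -
  define Q where "Q = (\<Inter>w\<in>W. {x\<in>topspace X. g w x \<in> ball (g w p) \<delta>}) \<inter> topspace X"
  have "openin X Q" unfolding Q_def
    using assms(1,2) by (intro openin_INT openin_continuous_map_preimage) auto
  moreover have "p \<in> Q" using assms(3,4) unfolding Q_def by auto
  moreover have "\<forall>w\<in>W. \<forall>x\<in>Q. \<bar>g w x - g w p\<bar> < \<delta>"
    unfolding Q_def by (auto simp: dist_real_def abs_minus_commute)
  ultimately show ?thesis by blast
qed

locale well_ordered_exhaustion =
  fixes T :: "nat \<Rightarrow> 'a::linorder set" and K :: "'a set" and M :: 'a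
  assumes chain: "\<And>n. T n \<subseteq> T (Suc n)"
    and well_ordered: "\<And>n. well_ordered_set (T n)"
    and top_mem: "\<And>n. M \<in> T n"
    and top_max: "\<And>n x. x \<in> T n \<Longrightarrow> x \<le> M"
    and completion: "is_completion (\<Union>n. T n) K"
begin

abbreviation X :: "'a topology" where "X \<equiv> order_topology_on K"

lemma T_subset_K: "T n \<subseteq> K"
  using completion unfolding is_completion_def by blast

lemma completion_dense: "x \<in> K \<Longrightarrow> y \<in> K \<Longrightarrow> x < y \<Longrightarrow> \<exists>n t. t \<in> T n \<and> x < t \<and> t \<le> y"
  using completion unfolding is_completion_def by blast

lemma T_mono: "n \<le> m \<Longrightarrow> T n \<subseteq> T m"
  using lift_Suc_mono_le[of T n m] chain by blast

lemma least_element: "A \<subseteq> T n \<Longrightarrow> A \<noteq> {} \<Longrightarrow> \<exists>m\<in>A. \<forall>x\<in>A. m \<le> x"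
  using well_ordered[of n] unfolding well_ordered_set_def by blast

text \<open>M is also the top of the completion, since T is dense in it.\<close>

lemma le_top: assumes "x \<in> K" shows "x \<le> M"
proof (rule ccontr)
  assume "\<not> x \<le> M"
  then obtain n t where "t \<in> T n" "M < t"
    using completion_dense[of M x] assms T_subset_K top_mem[of 0] by fastforce
  then show False using top_max leD by blast
qed

lemma compact_order_topology: "compact_space X"
  using completion unfolding is_completion_def by blast

lemma normal_order_topology: "normal_space X"
  using compact_Hausdorff_or_regular_imp_normal_space compact_order_topology Hausdorff_order_topology by blast

definition gaps :: "nat \<Rightarrow> ('a \<times> 'a) set" where
  "gaps n = {(a, b). consecutive (T n) a b \<or> (consecutive K a b \<and> b \<in> T n)}"

lemma gap_in_K: "(a, b) \<in> gaps n \<Longrightarrow> a \<in> K \<and> b \<in> K \<and> a < b"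
  using T_subset_K unfolding gaps_def consecutive_def by blast

definition step :: "'a \<times> 'a \<Rightarrow> 'a \<Rightarrow> real" where
  "step g = (SOME h. continuous_map X euclideanreal h \<and> (\<forall>x. h x \<in> {0..1}) \<and>
               (\<forall>x\<in>topspace X. x \<le> fst g \<longrightarrow> h x = 0) \<and> (\<forall>x\<in>topspace X. snd g \<le> x \<longrightarrow> h x = 1))"

lemma step_properties:
  assumes "(a, b) \<in> gaps n"
  shows "continuous_map X euclideanreal (step (a, b))" "step (a, b) x \<in> {0..1}"
    and "x \<in> topspace X \<Longrightarrow> x \<le> a \<Longrightarrow> step (a, b) x = 0"
    and "x \<in> topspace X \<Longrightarrow> b \<le> x \<Longrightarrow> step (a, b) x = 1"
  using someI_ex[OF order_step_function[OF normal_order_topology, of a b]] gap_in_K[OF assms]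
  unfolding step_def by auto

sublocale graded_family X gaps step
proof
  fix n i assume "i \<in> gaps n"
  moreover obtain a b where "i = (a, b)" by fastforce
  ultimately show "continuous_map X euclideanreal (step i)" "step i x \<in> {0..1}" for x
    using step_properties by auto
qed

text \<open>Every element t < y of some T n is the lower end of a gap (its successor in a larger
  T k) whose upper end is at most y.\<close>

lemma successor_gap:
  assumes "t \<in> T n" "y \<in> K" "t < y"
  shows "\<exists>k b. (t, b) \<in> gaps k \<and> b \<le> y"
proof -
  obtain n' t' where t': "t' \<in> T n'" "t < t'" "t' \<le> y"
    using completion_dense[of t y] assms T_subset_K by blast
  define k where "k = max n n'"
  have "t \<in> T k" "t' \<in> T k"
    using T_mono[of n k] T_mono[of n' k] assms(1) t'(1) unfolding k_def by auto
  then obtain b where b: "b \<in> T k" "t < b" "\<forall>r\<in>T k. t < r \<longrightarrow> b \<le> r"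
    using least_element[of "{r\<in>T k. t < r}" k] t'(2) by blast
  have "consecutive (T k) t b"
    using b \<open>t \<in> T k\<close> unfolding consecutive_def by (meson leD)
  then have "(t, b) \<in> gaps k" unfolding gaps_def by blast
  moreover have "b \<le> y" using b \<open>t' \<in> T k\<close> t' by force
  ultimately show ?thesis by blast
qed

lemma gap_between:
  assumes "x \<in> K" "y \<in> K" "x < y"
  shows "\<exists>n a b. (a, b) \<in> gaps n \<and> x \<le> a \<and> b \<le> y"
proof (cases "\<exists>n t. t \<in> T n \<and> x < t \<and> t < y")
  case True
  then obtain n t where "t \<in> T n" "x < t" "t < y" by blast
  then show ?thesis using successor_gap[of t n y] assms(2) by force
next
  case False
  obtain n t where t: "t \<in> T n" "x < t" "t \<le> y" using completion_dense assms by blast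
  then have "y \<in> T n" using False by force
  have "\<not> (x < r \<and> r < y)" if r: "r \<in> K" for r
  proof
    assume "x < r \<and> r < y"
    then obtain m s where "s \<in> T m" "x < s" "s \<le> r" using completion_dense[of x r] assms r by blast
    with \<open>x < r \<and> r < y\<close> False show False by force
  qed
  then have "(x, y) \<in> gaps n"
    using assms \<open>y \<in> T n\<close> unfolding gaps_def consecutive_def by blast
  then show ?thesis by blast
qed

text \<open>Hence the steps separate the points of X: the step of a gap between x < y is 0 at x
  and 1 at y.\<close>

lemma steps_separate_points:
  assumes "x \<in> topspace X" "y \<in> topspace X" "x \<noteq> y"
  shows "\<exists>n. \<exists>i\<in>gaps n. step i x \<noteq> step i y"
proof -
  have sep: "\<exists>n. \<exists>i\<in>gaps n. step i x \<noteq> step i y"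
    if xy: "x \<in> topspace X" "y \<in> topspace X" "x < y" for x y
  proof -
    obtain n a b where ab: "(a, b) \<in> gaps n" "x \<le> a" "b \<le> y"
      using gap_between[of x y] xy topspace_order_topology_on[of K] by blast
    then have "step (a, b) x = 0" "step (a, b) y = 1" using step_properties ab xy by auto
    then show ?thesis using ab(1) by force
  qed
  show ?thesis
  proof (cases "x < y")
    case True
    then show ?thesis using sep assms by blast
  next
    case False
    then have "y < x" using assms(3) by (simp add: neq_iff)
    then show ?thesis using sep assms by (metis)
  qed
qed

text \<open>Localisation at level n: a nonempty A \<subseteq> X can be cut by an open set Q so that A \<inter> Q
  lies in a single "cell" of T n, i.e. on the same side as some u \<in> T n of every other
  element of T n.  Take u least in T n above some point of A, and Q the ray below the successor
  of u in T n (if any).\<close>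

lemma level_cell:
  assumes A: "A \<subseteq> topspace X" "A \<noteq> {}"
  obtains u Q where "u \<in> T n" "openin X Q" "A \<inter> Q \<noteq> {}"
    and "\<And>x r. x \<in> A \<inter> Q \<Longrightarrow> r \<in> T n \<Longrightarrow> r < u \<Longrightarrow> r < x"
    and "\<And>x r. x \<in> A \<inter> Q \<Longrightarrow> r \<in> T n \<Longrightarrow> u < r \<Longrightarrow> x < r"
proof -
  have AK: "A \<subseteq> K" using A topspace_order_topology_on by blast
  define B where "B = {b \<in> T n. \<exists>x\<in>A. x \<le> b}"
  have "M \<in> B" using A AK le_top top_mem unfolding B_def by blast
  then obtain u where u: "u \<in> B" "\<forall>z\<in>B. u \<le> z" using least_element[of B n] unfolding B_def by blast
  then obtain x0 where x0: "x0 \<in> A" "x0 \<le> u" and "u \<in> T n" unfolding B_def by blast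
  have below: "r < x" if "x \<in> A" "r \<in> T n" "r < u" for x r
  proof (rule ccontr)
    assume "\<not> r < x"
    then have "r \<in> B" using that unfolding B_def by (auto simp: not_less)
    then show False using u(2) \<open>r < u\<close> by fastforce
  qed
  show ?thesis
  proof (cases "\<exists>r\<in>T n. u < r")
    case True
    then obtain s where s: "s \<in> T n" "u < s" "\<forall>r\<in>T n. u < r \<longrightarrow> s \<le> r"
      using least_element[of "{r\<in>T n. u < r}" n] by blast
    have "openin X {x\<in>K. x < s}" using openin_order_topology_below s(1) T_subset_K by blast
    moreover have "x0 \<in> A \<inter> {x\<in>K. x < s}" using x0 s AK by auto
    moreover have "x < r" if "x \<in> A \<inter> {x\<in>K. x < s}" "r \<in> T n" "u < r" for x r
      using s that by force
    ultimately show ?thesis using that[OF \<open>u \<in> T n\<close>] below by blast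
  next
    case False
    then show ?thesis using that[OF \<open>u \<in> T n\<close> openin_topspace] below A by blast
  qed
qed

lemma gap_outside_cell:
  assumes "u \<in> T n" "C \<subseteq> K" "(a, b) \<in> gaps n" "a \<noteq> u" "b \<noteq> u"
    and below: "\<And>x r. x \<in> C \<Longrightarrow> r \<in> T n \<Longrightarrow> r < u \<Longrightarrow> r < x"
    and above: "\<And>x r. x \<in> C \<Longrightarrow> r \<in> T n \<Longrightarrow> u < r \<Longrightarrow> x < r"
  shows "(\<forall>x\<in>C. x \<le> a) \<or> (\<forall>x\<in>C. b \<le> x)"
proof (rule ccontr)
  assume "\<not> ?thesis"
  then obtain x y where x: "x \<in> C" "a < x" and y: "y \<in> C" "y < b" by (auto simp: not_le)
  have "b \<in> T n" using assms(3) unfolding gaps_def consecutive_def by blast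
  then have "\<not> b < u" using below[OF y(1)] y(2) by fastforce
  then have "u < b" using assms(5) by (simp add: neq_iff)
  then have "x < b" using above[OF x(1) \<open>b \<in> T n\<close>] by blast
  from assms(3) consider "consecutive (T n) a b" | "consecutive K a b"
    unfolding gaps_def by blast
  then show False
  proof cases
    case 1
    then have "a \<in> T n" "\<not> (a < u \<and> u < b)" using assms(1) unfolding consecutive_def by blast+
    then have "u < a" using \<open>u < b\<close> assms(4) by (simp add: neq_iff)
    then show False using above[OF x(1) \<open>a \<in> T n\<close>] x(2) by fastforce
  next
    case 2
    then show False using x \<open>x < b\<close> assms(2) unfolding consecutive_def by blast
  qed
qed

lemma finite_gaps_at: "finite {i \<in> gaps n. fst i = u \<or> snd i = u}"
proof -
  let ?succ = "{b. consecutive (T n) u b} \<union> {b. consecutive K u b}"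
  let ?pred = "{a. consecutive (T n) a u} \<union> {a. consecutive K a u}"
  have "{i \<in> gaps n. fst i = u \<or> snd i = u} \<subseteq> {u} \<times> ?succ \<union> ?pred \<times> {u}"
    unfolding gaps_def by auto
  moreover have "finite ({u} \<times> ?succ \<union> ?pred \<times> {u})"
    using finite_successors finite_predecessors by blast
  ultimately show ?thesis using finite_subset by blast
qed

text \<open>The level-by-level fragmentation property of the steps: inside a cell of u, the steps
  of gaps not ending at u are constant (0 or 1), and the finitely many gaps ending at u are
  controlled by continuity at a point of the cell.\<close>

lemma level_fragment:
  assumes A: "A \<subseteq> topspace X" "A \<noteq> {}" and "\<delta> > 0"
  shows "\<exists>Q. openin X Q \<and> A \<inter> Q \<noteq> {} \<and>
           (\<forall>i\<in>gaps n. \<forall>x\<in>A\<inter>Q. \<forall>y\<in>A\<inter>Q. \<bar>step i x - step i y\<bar> \<le> \<delta>)"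
proof -
  obtain u Q1 where u: "u \<in> T n" and Q1: "openin X Q1" "A \<inter> Q1 \<noteq> {}"
    and below: "\<And>x r. x \<in> A \<inter> Q1 \<Longrightarrow> r \<in> T n \<Longrightarrow> r < u \<Longrightarrow> r < x"
    and above: "\<And>x r. x \<in> A \<inter> Q1 \<Longrightarrow> r \<in> T n \<Longrightarrow> u < r \<Longrightarrow> x < r"
    using level_cell[OF A] by blast
  obtain x0 where x0: "x0 \<in> A \<inter> Q1" using Q1(2) by blast
  let ?W = "{i \<in> gaps n. fst i = u \<or> snd i = u}"
  have "x0 \<in> topspace X" "\<And>i. i \<in> ?W \<Longrightarrow> continuous_map X euclideanreal (step i)"
    using x0 A(1) continuous by auto
  then obtain Q2 where Q2: "openin X Q2" "x0 \<in> Q2"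
    and near: "\<forall>i\<in>?W. \<forall>x\<in>Q2. \<bar>step i x - step i x0\<bar> < \<delta>/2"
    using finitely_many_continuous_near[OF finite_gaps_at[of n u], of X step x0 "\<delta>/2"] \<open>\<delta> > 0\<close>
    by auto
  have AK: "A \<inter> Q1 \<subseteq> K" using A(1) topspace_order_topology_on by blast
  have "\<bar>step i x - step i y\<bar> \<le> \<delta>"
    if i: "i \<in> gaps n" and xy: "x \<in> A \<inter> (Q1 \<inter> Q2)" "y \<in> A \<inter> (Q1 \<inter> Q2)" for i x y
  proof (cases "i \<in> ?W")
    case True
    then have "\<bar>step i x - step i x0\<bar> < \<delta>/2" "\<bar>step i y - step i x0\<bar> < \<delta>/2"
      using near True xy by blast+
    then show ?thesis by linarith
  next
    case False
    obtain a b where ab: "i = (a, b)" by fastforce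
    then have "(\<forall>z\<in>A \<inter> Q1. z \<le> a) \<or> (\<forall>z\<in>A \<inter> Q1. b \<le> z)"
      using gap_outside_cell[OF u AK _ _ _ below above] i False by auto
    moreover have "x \<in> topspace X" "y \<in> topspace X" using xy A(1) by auto
    ultimately have "step i x = step i y"
      using step_properties(3,4)[of a b n] i xy unfolding ab by (metis IntD1 IntD2 IntI)
    then show ?thesis using \<open>\<delta> > 0\<close> by simp
  qed
  moreover have "openin X (Q1 \<inter> Q2)" using Q1(1) Q2(1) by blast
  moreover have "x0 \<in> A \<inter> (Q1 \<inter> Q2)" using x0 Q2(2) by blast
  ultimately show ?thesis by blast
qed

theorem radon_nikodym_compact: "radon_nikodym_compact X"
  unfolding radon_nikodym_compact_def
  using compact_order_topology graded_dist_metric[OF steps_separate_points] graded_dist_lsc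
    graded_dist_fragments[OF level_fragment] by blast

end

text \<open>The main theorem: only the common maximum of the T n is needed.\<close>

theorem theorem6:
  fixes T :: "nat \<Rightarrow> 'a::linorder set" and K :: "'a set"
  assumes mono: "\<And>n. T n \<subseteq> T (Suc n)"
    and wo: "\<And>n. well_ordered_set (T n)"
    and minmax: "\<exists>m M. \<forall>n. m \<in> T n \<and> M \<in> T n \<and> (\<forall>x\<in>T n. m \<le> x \<and> x \<le> M)"
    and compl: "is_completion (\<Union>n. T n) K"
  shows "radon_nikodym_compact (order_topology_on K)"
proof -
  obtain M where "\<And>n. M \<in> T n" "\<And>n x. x \<in> T n \<Longrightarrow> x \<le> M" using minmax by blast
  then interpret well_ordered_exhaustion T K M using mono wo compl by unfold_locales auto
  show ?thesis by (rule radon_nikodym_compact)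
qed

end
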